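(* Let $\varepsilon\in(0,1)$. Given a parameter $C\le\frac{1}{4\varepsilon}$ for the number of coordinates with frequency more than $1$, and a stream whose number of distinct elements is at least $\Omega\left(\frac{1}{\varepsilon^2}\right)$, there exists a one-pass streaming algorithm that uses $O\left(\frac{C}{\varepsilon}\log n\right)$ bits of space and outputs a $(1+\varepsilon)$-approximation to the number of distinct elements in the stream with probability at least $0.98$.
   Context: Streaming model: a stream of insertions of items from the universe $[n]$, of length polynomially bounded in $n$, defines a frequency vector $f\in\mathbb{Z}_{\ge 0}^n$ ($f_i$ is the number of occurrences of $i$). The number of distinct elements is $F_0=|\{i:f_i\neq 0\}|$. The algorithm makes a single pass over the stream; a $(1+\varepsilon)$-approximation to $F_0$ is a value $\hat F$ with $(1-\varepsilon)F_0\le\hat F\le(1+\varepsilon)F_0$. *)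

theory Defs
  imports "HOL-Probability.Probability_Mass_Function"
begin

text \<open>A randomized one-pass streaming algorithm over the universe of items (naturals).
  Its memory state is a bit string; it may use fresh random bits at every step
  (so randomness it wants to keep, e.g. hash functions, must be stored in the state).\<close>
record stream_alg =
  alg_init :: "bool list pmf"
  alg_upd  :: "nat \<Rightarrow> bool list \<Rightarrow> bool list pmf"
  alg_out  :: "bool list \<Rightarrow> real"

definition alg_run :: "stream_alg \<Rightarrow> nat list \<Rightarrow> bool list pmf" where
  "alg_run A xs = fold (\<lambda>x p. bind_pmf p (alg_upd A x)) xs (alg_init A)"

definition uses_space :: "stream_alg \<Rightarrow> real \<Rightarrow> bool" where
  "uses_space A s \<longleftrightarrow>
     (\<forall>st\<in>set_pmf (alg_init A). real (length st) \<le> s) \<and>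
     (\<forall>x st. real (length st) \<le> s \<longrightarrow> (\<forall>st'\<in>set_pmf (alg_upd A x st). real (length st') \<le> s))"

definition freq :: "nat list \<Rightarrow> nat \<Rightarrow> nat" where
  "freq xs i = count_list xs i"

definition F0 :: "nat list \<Rightarrow> nat" where
  "F0 xs = card {i. freq xs i \<noteq> 0}"

definition num_heavy :: "nat list \<Rightarrow> nat" where
  "num_heavy xs = card {i. freq xs i > 1}"

definition success_prob :: "stream_alg \<Rightarrow> real \<Rightarrow> nat list \<Rightarrow> real" where
  "success_prob A eps xs =
     measure_pmf.prob (alg_run A xs)
       {st. (1 - eps) * real (F0 xs) \<le> alg_out A st \<and> alg_out A st \<le> (1 + eps) * real (F0 xs)}"

end

theory Submission
  imports Defs "HOL-Library.Log_Nat"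
begin

text \<open>The algorithm is the deterministic Misra--Gries summary with m \<approx> C/eps counters. It keeps
  counters T and the number D of decrement rounds; a round lowers all m tracked counters and
  drops the arriving item, so it discards m + 1 occurrences. Hence L = \<Sum>T + (m + 1) D for the
  stream length L, and T i \<le> f i \<le> T i + D for every frequency f i. The output
  |{i. T i > 0}| + (m + 1) D = L - \<Sum>(T i - 1) is therefore at least F0 = L - \<Sum>(f i - 1), and
  exceeds it by at most D for each of the at most C items with f i > 1. As the discarded
  occurrences are at most D per such item and one per other item, (m + 1 - C) D \<le> F0, so the
  error is at most eps F0. The counters and their keys fit into O(m) words of O(log n) bits, and
  the output is correct with probability 1.\<close>

abbreviation tracked :: "(nat \<Rightarrow> nat) \<Rightarrow> nat set" where
  "tracked T \<equiv> {i. 0 < T i}"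

definition mg_step :: "nat \<Rightarrow> nat \<Rightarrow> (nat \<Rightarrow> nat) \<times> nat \<Rightarrow> (nat \<Rightarrow> nat) \<times> nat" where
  "mg_step m x = (\<lambda>(T, D). if 0 < T x \<or> card (tracked T) < m
      then (T(x := Suc (T x)), D) else ((\<lambda>i. T i - 1), Suc D))"

definition mg_summary :: "nat \<Rightarrow> nat list \<Rightarrow> (nat \<Rightarrow> nat) \<times> nat" where
  "mg_summary m xs = fold (mg_step m) xs ((\<lambda>_. 0), 0)"

definition mg_invariant :: "nat \<Rightarrow> nat list \<Rightarrow> (nat \<Rightarrow> nat) \<times> nat \<Rightarrow> bool" where
  "mg_invariant m xs = (\<lambda>(T, D). tracked T \<subseteq> set xs \<and> card (tracked T) \<le> m \<and>
     (\<forall>i. T i \<le> count_list xs i \<and> count_list xs i \<le> T i + D) \<and>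
     sum T (set xs) + (m + 1) * D = length xs)"

lemma mg_invariantD:
  assumes "mg_invariant m xs (T, D)"
  shows "tracked T \<subseteq> set xs" "card (tracked T) \<le> m"
    "T i \<le> count_list xs i" "count_list xs i \<le> T i + D"
    "sum T (set xs) + (m + 1) * D = length xs"
  using assms by (auto simp: mg_invariant_def)

lemma sum_eq_sum_pred_add_card_tracked:
  assumes "finite S" "tracked T \<subseteq> S"
  shows "sum T S = (\<Sum>i\<in>S. T i - 1) + card (tracked T)"
proof -
  have "sum T S = (\<Sum>i\<in>S. (T i - 1) + of_bool (0 < T i))"
    by (intro sum.cong) auto
  also have "\<dots> = (\<Sum>i\<in>S. T i - 1) + card (S \<inter> tracked T)"
    using assms(1) by (simp add: sum.distrib Int_def)
  finally show ?thesis
    using assms(2) by (simp add: Int_absorb1)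
qed

lemma mg_invariant_increment:
  assumes inv: "mg_invariant m xs (T, D)" and room: "0 < T x \<or> card (tracked T) < m"
  shows "mg_invariant m (xs @ [x]) (T(x := Suc (T x)), D)"
proof -
  note I = mg_invariantD[OF inv]
  have fin: "finite (tracked T)"
    using I(1) finite_subset by blast
  have tracked_upd: "tracked (T(x := Suc (T x))) = insert x (tracked T)"
    by auto
  have "card (insert x (tracked T)) \<le> m"
    using room I(2) fin by (cases "x \<in> tracked T") (auto simp: insert_absorb)
  moreover have "sum (T(x := Suc (T x))) (insert x (set xs)) = Suc (sum T (set xs))"
  proof (cases "x \<in> set xs")
    case True
    then show ?thesis
      by (simp add: sum.remove[of "set xs" x] insert_absorb)
  next
    case False
    then have "T x = 0"
      using I(1) by auto
    have "sum (T(x := Suc (T x))) (set xs) = sum T (set xs)"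
      using False by (intro sum.cong) auto
    with False \<open>T x = 0\<close> show ?thesis
      by simp
  qed
  ultimately show ?thesis
    using I tracked_upd by (auto simp: mg_invariant_def)
qed

lemma mg_invariant_decrement:
  assumes inv: "mg_invariant m xs (T, D)" and full: "T x = 0" "m \<le> card (tracked T)"
  shows "mg_invariant m (xs @ [x]) ((\<lambda>i. T i - 1), Suc D)"
proof -
  note I = mg_invariantD[OF inv]
  have fin: "finite (tracked T)"
    using I(1) finite_subset by blast
  have "card (tracked (\<lambda>i. T i - 1)) \<le> card (tracked T)"
    using fin by (intro card_mono) auto
  moreover have "tracked (\<lambda>i. T i - 1) \<subseteq> set (xs @ [x])"
    using I(1) by force
  moreover have "T i - 1 \<le> count_list (xs @ [x]) i" for i
    using I(3)[of i] by simp
  moreover have "count_list (xs @ [x]) i \<le> (T i - 1) + Suc D" for i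
    using I(4)[of i] full(1) by (cases "i = x") auto
  moreover have "(\<Sum>i\<in>insert x (set xs). T i - 1) + m = sum T (set xs)"
    using sum_eq_sum_pred_add_card_tracked[OF List.finite_set I(1)] full I(2)
    by (simp add: sum.insert_if)
  then have "(\<Sum>i\<in>set (xs @ [x]). T i - 1) + (m + 1) * Suc D = length (xs @ [x])"
    using I(5) by simp
  ultimately show ?thesis
    using I(2) by (simp add: mg_invariant_def)
qed

lemma mg_invariant_mg_summary: "mg_invariant m xs (mg_summary m xs)"
proof (induction xs rule: rev_induct)
  case Nil
  then show ?case
    by (simp add: mg_summary_def mg_invariant_def)
next
  case (snoc x xs)
  obtain T D where TD: "mg_summary m xs = (T, D)"
    by fastforce
  have "mg_summary m (xs @ [x]) = mg_step m x (T, D)"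
    using TD by (simp add: mg_summary_def)
  then show ?case
    using snoc TD mg_invariant_increment[of m xs T D x] mg_invariant_decrement[of m xs T D x]
    by (auto simp: mg_step_def not_less)
qed

lemma F0_eq_card_set: "F0 xs = card (set xs)"
  unfolding F0_def freq_def by (simp add: count_list_0_iff)

lemma tracked_count_list: "tracked (count_list xs) = set xs"
  by (auto simp: count_list_0_iff simp flip: neq0_conv)

lemma length_eq_F0_add_excess: "length xs = F0 xs + (\<Sum>i\<in>set xs. count_list xs i - 1)"
  using sum_eq_sum_pred_add_card_tracked[of "set xs" "count_list xs"]
  by (simp add: sum_count_set tracked_count_list F0_eq_card_set)

lemma heavy_subset_set: "{i. 1 < count_list xs i} \<subseteq> set (xs :: nat list)"
  using tracked_count_list[of xs] by auto

definition mg_estimate :: "nat \<Rightarrow> (nat \<Rightarrow> nat) \<times> nat \<Rightarrow> nat" where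
  "mg_estimate m = (\<lambda>(T, D). card (tracked T) + (m + 1) * D)"

lemma mg_estimate_add_residue:
  assumes "mg_invariant m xs (T, D)"
  shows "mg_estimate m (T, D) + (\<Sum>i\<in>set xs. T i - 1) = length xs"
  using sum_eq_sum_pred_add_card_tracked[OF List.finite_set mg_invariantD(1)[OF assms]]
    mg_invariantD(5)[OF assms]
  by (simp add: mg_estimate_def)

lemma F0_le_mg_estimate:
  assumes "mg_invariant m xs (T, D)"
  shows "F0 xs \<le> mg_estimate m (T, D)"
proof -
  have "(\<Sum>i\<in>set xs. T i - 1) \<le> (\<Sum>i\<in>set xs. count_list xs i - 1)"
    using mg_invariantD(3)[OF assms] by (intro sum_mono diff_le_mono)
  then show ?thesis
    using length_eq_F0_add_excess[of xs] mg_estimate_add_residue[OF assms] by linarith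
qed

lemma mg_estimate_le_F0_add:
  assumes "mg_invariant m xs (T, D)"
  shows "mg_estimate m (T, D) \<le> F0 xs + num_heavy xs * D"
proof -
  define H where "H = {i. 1 < count_list xs i}"
  have "count_list xs i - 1 \<le> (T i - 1) + (if i \<in> H then D else 0)" for i
    using mg_invariantD(4)[OF assms, of i] by (auto simp: H_def)
  then have "(\<Sum>i\<in>set xs. count_list xs i - 1)
      \<le> (\<Sum>i\<in>set xs. (T i - 1) + (if i \<in> H then D else 0))"
    by (intro sum_mono)
  also have "\<dots> = (\<Sum>i\<in>set xs. T i - 1) + card H * D"
    using heavy_subset_set[of xs] by (simp add: sum.distrib sum.If_cases Int_absorb1 H_def)
  finally show ?thesis
    using length_eq_F0_add_excess[of xs] mg_estimate_add_residue[OF assms]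
    by (simp add: num_heavy_def freq_def H_def)
qed

lemma mg_decrements_bound:
  assumes "mg_invariant m xs (T, D)"
  shows "(m + 1) * D + num_heavy xs \<le> F0 xs + num_heavy xs * D"
proof -
  define H where "H = {i. 1 < count_list xs i}"
  have H: "H \<subseteq> set xs"
    using heavy_subset_set by (simp add: H_def)
  have "(m + 1) * D = (\<Sum>i\<in>set xs. count_list xs i - T i)"
    using mg_invariantD(3,5)[OF assms] by (simp add: sum_subtractf_nat sum_count_set)
  also have "\<dots> \<le> (\<Sum>i\<in>set xs. if i \<in> H then D else 1)"
    using mg_invariantD(4)[OF assms] by (intro sum_mono) (auto simp: H_def le_diff_conv add.commute)
  also have "\<dots> = card H * D + card (set xs - H)"
    using H by (simp add: sum.If_cases Int_absorb1 Diff_eq)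
  finally have "(m + 1) * D \<le> card H * D + card (set xs - H)" .
  moreover have "card (set xs - H) + card H = F0 xs"
    using H by (simp add: F0_eq_card_set card_Diff_subset card_mono finite_subset)
  ultimately show ?thesis
    by (simp add: num_heavy_def freq_def H_def)
qed

lemma mg_estimate_le:
  fixes eps :: real
  assumes inv: "mg_invariant m xs (T, D)" and eps: "0 < eps"
    and room: "(1 + eps) * num_heavy xs \<le> eps * m"
  shows "mg_estimate m (T, D) \<le> (1 + eps) * F0 xs"
proof -
  let ?h = "real (num_heavy xs)"
  have "?h \<le> eps * (real m + 1 - ?h)"
    using room eps by (simp add: algebra_simps)
  then have "?h * D \<le> eps * ((real m + 1 - ?h) * D)"
    by (metis mult.assoc mult_right_mono of_nat_0_le_iff)
  also have "\<dots> \<le> eps * F0 xs"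
    using mg_decrements_bound[OF inv] eps
    by (intro mult_left_mono) (simp_all add: algebra_simps flip: of_nat_mult of_nat_add)
  finally show ?thesis
    using mg_estimate_le_F0_add[OF inv] by (simp add: algebra_simps flip: of_nat_mult of_nat_add)
qed

definition encode_nats :: "nat \<Rightarrow> nat list \<Rightarrow> bool list" where
  "encode_nats w xs = concat (map (\<lambda>x. map (bit x) [0..<w]) xs)"

primrec decode_nats :: "nat \<Rightarrow> nat \<Rightarrow> bool list \<Rightarrow> nat list" where
  "decode_nats w 0 bs = []"
| "decode_nats w (Suc r) bs = horner_sum of_bool 2 (take w bs) # decode_nats w r (drop w bs)"

lemma length_encode_nats [simp]: "length (encode_nats w xs) = w * length xs"
  unfolding encode_nats_def by (induction xs) auto

lemma decode_encode_nats: "decode_nats w (length xs) (encode_nats w xs) = map (take_bit w) xs"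
  unfolding encode_nats_def by (induction xs) (auto simp: horner_sum_bit_eq_take_bit)

fun pairs_of :: "nat list \<Rightarrow> (nat \<times> nat) list" where
  "pairs_of (a # b # r) = (a, b) # pairs_of r"
| "pairs_of _ = []"

text \<open>Truncating to m tracked pairs bounds the length of every encoding, also of those
  computed from bit strings that do not encode a reachable summary.\<close>

definition summary_nats :: "nat \<Rightarrow> (nat \<Rightarrow> nat) \<times> nat \<Rightarrow> nat list" where
  "summary_nats m = (\<lambda>(T, D). D # concat (map (\<lambda>i. [i, T i]) (take m (sorted_list_of_set (tracked T)))))"

definition summary_of_nats :: "nat list \<Rightarrow> (nat \<Rightarrow> nat) \<times> nat" where
  "summary_of_nats ns = ((\<lambda>i. case map_of (pairs_of (tl ns)) i of None \<Rightarrow> 0 | Some c \<Rightarrow> c), hd ns)"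

definition encode_summary :: "nat \<Rightarrow> nat \<Rightarrow> (nat \<Rightarrow> nat) \<times> nat \<Rightarrow> bool list" where
  "encode_summary w m \<sigma> = encode_nats w (summary_nats m \<sigma>)"

definition decode_summary :: "nat \<Rightarrow> bool list \<Rightarrow> (nat \<Rightarrow> nat) \<times> nat" where
  "decode_summary w bs = summary_of_nats (decode_nats w (length bs div w) bs)"

lemma pairs_of_concat: "pairs_of (concat (map (\<lambda>i. [i, T i]) is)) = map (\<lambda>i. (i, T i)) is"
  by (induction "is") auto

lemma length_summary_nats: "length (summary_nats m \<sigma>) \<le> 2 * m + 1"
proof -
  have pairs: "length (concat (map (\<lambda>i. [i, T i]) is)) = 2 * length is" for T "is"
    by (induction "is") auto
  show ?thesis
    by (simp add: summary_nats_def pairs split: prod.split)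
qed

lemma length_encode_summary: "length (encode_summary w m \<sigma>) \<le> w * (2 * m + 1)"
  unfolding encode_summary_def using mult_le_mono2[OF length_summary_nats] by simp

lemma summary_of_nats_summary_nats:
  assumes "finite (tracked T)" "card (tracked T) \<le> m"
  shows "summary_of_nats (summary_nats m (T, D)) = (T, D)"
proof -
  have "(case map_of (map (\<lambda>i. (i, T i)) (sorted_list_of_set (tracked T))) i of
      None \<Rightarrow> 0 | Some c \<Rightarrow> c) = T i" for i
    using assms(1) by (auto simp: map_of_map_restrict restrict_map_def)
  then show ?thesis
    using assms by (simp add: summary_nats_def summary_of_nats_def pairs_of_concat)
qed

lemma decode_encode_summary:
  assumes "0 < w" "finite (tracked T)" "card (tracked T) \<le> m"
    and "D < 2 ^ w" "\<forall>i\<in>tracked T. i < 2 ^ w" "\<forall>i. T i < 2 ^ w"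
  shows "decode_summary w (encode_summary w m (T, D)) = (T, D)"
proof -
  have "\<forall>x\<in>set (summary_nats m (T, D)). x < 2 ^ w"
    using assms by (auto simp: summary_nats_def)
  then have "decode_nats w (length (summary_nats m (T, D))) (encode_summary w m (T, D))
      = summary_nats m (T, D)"
    by (simp add: encode_summary_def decode_encode_nats take_bit_nat_eq_self map_idI)
  then show ?thesis
    using assms by (simp add: decode_summary_def encode_summary_def summary_of_nats_summary_nats)
qed

lemma alg_run_deterministic:
  assumes "alg_init A = return_pmf s" "\<And>x bs. alg_upd A x bs = return_pmf (f x bs)"
  shows "alg_run A xs = return_pmf (fold f xs s)"
proof -
  have "fold (\<lambda>x p. bind_pmf p (alg_upd A x)) xs (return_pmf t) = return_pmf (fold f xs t)" for t
    using assms(2) by (induction xs arbitrary: t) (auto simp: bind_return_pmf)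
  then show ?thesis
    using assms(1) by (simp add: alg_run_def)
qed

definition mg_alg :: "nat \<Rightarrow> nat \<Rightarrow> stream_alg" where
  "mg_alg w m = \<lparr>alg_init = return_pmf (encode_summary w m ((\<lambda>_. 0), 0)),
     alg_upd = (\<lambda>x bs. return_pmf (encode_summary w m (mg_step m x (decode_summary w bs)))),
     alg_out = (\<lambda>bs. real (mg_estimate m (decode_summary w bs)))\<rparr>"

lemma uses_space_mg_alg:
  assumes "real (w * (2 * m + 1)) \<le> s"
  shows "uses_space (mg_alg w m) s"
proof -
  have "real (length (encode_summary w m \<sigma>)) \<le> s" for \<sigma>
    using length_encode_summary[of w m \<sigma>] assms by (meson of_nat_le_iff order.trans)
  then show ?thesis
    by (simp add: uses_space_def mg_alg_def)
qed

lemma decode_encode_mg_summary: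
  assumes "0 < w" "length xs < 2 ^ w" "set xs \<subseteq> {..<2 ^ w}"
  shows "decode_summary w (encode_summary w m (mg_summary m xs)) = mg_summary m xs"
proof -
  obtain T D where TD: "mg_summary m xs = (T, D)"
    by fastforce
  note I = mg_invariantD[OF mg_invariant_mg_summary[of m xs, unfolded TD]]
  have "finite (tracked T)"
    using I(1) finite_subset by blast
  moreover have "D \<le> length xs"
    using I(5) by simp
  then have "D < 2 ^ w"
    using assms(2) by linarith
  moreover have "T i < 2 ^ w" for i
    using I(3)[of i] count_le_length[of xs i] assms(2) by linarith
  ultimately show ?thesis
    unfolding TD using assms I(1,2) by (intro decode_encode_summary) auto
qed

lemma alg_run_mg_alg:
  assumes "0 < w" "length xs < 2 ^ w" "set xs \<subseteq> {..<2 ^ w}"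
  shows "alg_run (mg_alg w m) xs = return_pmf (encode_summary w m (mg_summary m xs))"
proof -
  let ?f = "\<lambda>x bs. encode_summary w m (mg_step m x (decode_summary w bs))"
  have "fold ?f xs (encode_summary w m ((\<lambda>_. 0), 0)) = encode_summary w m (mg_summary m xs)"
    using assms(2,3)
  proof (induction xs rule: rev_induct)
    case Nil
    then show ?case
      by (simp add: mg_summary_def)
  next
    case (snoc x xs)
    then have "decode_summary w (encode_summary w m (mg_summary m xs)) = mg_summary m xs"
      using assms(1) by (intro decode_encode_mg_summary) auto
    with snoc show ?case
      by (simp add: mg_summary_def)
  qed
  then show ?thesis
    by (simp add: alg_run_deterministic[where f = ?f] mg_alg_def)
qed

lemma success_prob_mg_alg:
  fixes eps :: real
  assumes "0 < w" "length xs < 2 ^ w" "set xs \<subseteq> {..<2 ^ w}"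
    and "0 < eps" "(1 + eps) * num_heavy xs \<le> eps * m"
  shows "success_prob (mg_alg w m) eps xs = 1"
proof -
  obtain T D where TD: "mg_summary m xs = (T, D)"
    by fastforce
  have inv: "mg_invariant m xs (T, D)"
    using mg_invariant_mg_summary[of m xs] TD by simp
  have run: "alg_run (mg_alg w m) xs = return_pmf (encode_summary w m (T, D))"
    using alg_run_mg_alg[OF assms(1-3), of m] TD by simp
  have out: "alg_out (mg_alg w m) (encode_summary w m (T, D)) = mg_estimate m (T, D)"
    using decode_encode_mg_summary[OF assms(1-3), of m] TD by (simp add: mg_alg_def)
  have "(1 - eps) * F0 xs \<le> F0 xs"
    using assms(4) by (simp add: algebra_simps)
  also have "\<dots> \<le> mg_estimate m (T, D)"
    using F0_le_mg_estimate[OF inv] by simp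
  finally show ?thesis
    using mg_estimate_le[OF inv assms(4,5)] by (simp add: success_prob_def run out)
qed

lemma floorlog_le_ln:
  assumes "2 \<le> n"
  shows "real (floorlog 2 n) \<le> 4 * ln (real n)"
proof -
  have log_ge_1: "1 \<le> log 2 (real n)"
    using assms by simp
  have "real (floorlog 2 n) = real (nat \<lfloor>log 2 (real n)\<rfloor>) + 1"
    using assms by (simp add: floorlog_def)
  also have "\<dots> \<le> 2 * log 2 (real n)"
    using log_ge_1 by linarith
  also have "\<dots> = 2 * ln (real n) / ln 2"
    by (simp add: log_def)
  also have "\<dots> \<le> 2 * ln (real n) / (1 / 2)"
    using ln_add1_gt[of 1] assms by (intro divide_left_mono) auto
  finally show ?thesis
    by simp
qed

lemma power_less_two_power_floorlog:
  assumes "0 < n" "0 < j"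
  shows "n ^ j < 2 ^ (j * floorlog 2 n)"
proof -
  have "n ^ j < (2 ^ floorlog 2 n) ^ j"
    using floorlog_bounds[of n 2] assms by (intro power_strict_mono) auto
  then show ?thesis
    by (simp add: mult.commute flip: power_mult)
qed

lemma counter_number_le:
  fixes eps :: real and C :: nat
  assumes "0 < eps" "eps < 1" "1 \<le> C"
  shows "real (2 * (C + nat \<lceil>C / eps\<rceil>) + 1) \<le> 7 * (C / eps)"
proof -
  have "real C \<le> C / eps" "1 \<le> C / eps"
    using assms by (simp_all add: le_divide_eq)
  then show ?thesis
    by simp linarith
qed

lemma heavy_fit_counters:
  fixes eps :: real and h C :: nat
  assumes "0 < eps" "h \<le> C"
  shows "(1 + eps) * h \<le> eps * (C + nat \<lceil>C / eps\<rceil>)"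
proof -
  have "real C / eps \<le> nat \<lceil>C / eps\<rceil>"
    by linarith
  then have "real C \<le> eps * nat \<lceil>C / eps\<rceil>"
    using assms(1) by (metis pos_divide_le_eq mult.commute)
  moreover have "eps * h \<le> eps * C"
    using assms by simp
  ultimately show ?thesis
    using assms(2) by (simp add: algebra_simps)
qed

lemma F0_algorithm_exists:
  fixes eps :: real and k :: nat
  assumes n: "2 \<le> n" and eps: "0 < eps" "eps < 1" and C: "1 \<le> C"
  obtains A where "uses_space A (28 * (real k + 1) * (C / eps) * ln n)"
    and "\<And>xs. set xs \<subseteq> {..<n} \<Longrightarrow> length xs \<le> n ^ k \<Longrightarrow> num_heavy xs \<le> C \<Longrightarrow>
      success_prob A eps xs = 1"
proof -
  define w where "w = (k + 1) * floorlog 2 n"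
  define m where "m = C + nat \<lceil>C / eps\<rceil>"
  have word: "n ^ (k + 1) < 2 ^ w"
    using power_less_two_power_floorlog[of n "k + 1"] n by (simp add: w_def)
  have "real (w * (2 * m + 1)) \<le> (real k + 1) * (4 * ln n) * (7 * (C / eps))"
    unfolding w_def m_def of_nat_mult
    using floorlog_le_ln[OF n] counter_number_le[OF eps C] n by (intro mult_mono) auto
  then have "uses_space (mg_alg w m) (28 * (real k + 1) * (C / eps) * ln n)"
    by (intro uses_space_mg_alg) (simp add: algebra_simps)
  moreover have "success_prob (mg_alg w m) eps xs = 1"
    if xs: "set xs \<subseteq> {..<n}" "length xs \<le> n ^ k" "num_heavy xs \<le> C" for xs
  proof (rule success_prob_mg_alg)
    have "n \<le> n ^ (k + 1)"
      using n by (intro self_le_power) auto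
    then show "set xs \<subseteq> {..<2 ^ w}"
      using xs(1) word by (meson lessThan_subset_iff le_less_trans less_imp_le order.trans)
    show "length xs < 2 ^ w"
      using xs(2) word power_increasing[of k "k + 1" n] n by linarith
    show "0 < w"
      using word n by (intro gr0I) auto
    show "(1 + eps) * num_heavy xs \<le> eps * m"
      using heavy_fit_counters[OF eps(1) xs(3)] by (simp add: m_def)
  qed (fact eps)
  ultimately show thesis
    using that by blast
qed

theorem theorem5p6:
  fixes k :: nat
  shows "\<exists>c0 c1 :: real. c0 > 0 \<and> c1 > 0 \<and>
    (\<forall>(n::nat) (eps::real) (C::nat).
       n \<ge> 2 \<longrightarrow> 0 < eps \<longrightarrow> eps < 1 \<longrightarrow> 1 \<le> C \<longrightarrow> real C \<le> 1 / (4 * eps) \<longrightarrow>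
       (\<exists>A. uses_space A (c1 * (real C / eps) * ln (real n)) \<and>
          (\<forall>xs. set xs \<subseteq> {..<n} \<longrightarrow> length xs \<le> n ^ k \<longrightarrow>
                num_heavy xs \<le> C \<longrightarrow> real (F0 xs) \<ge> c0 / eps\<^sup>2 \<longrightarrow>
                success_prob A eps xs \<ge> 0.98)))"
proof (rule exI[of _ 1], rule exI[of _ "28 * (real k + 1)"], intro conjI allI impI)
  fix n C :: nat and eps :: real
  assume n: "2 \<le> n" and eps: "0 < eps" "eps < 1" and C: "1 \<le> C"
    and "real C \<le> 1 / (4 * eps)"
  obtain A where "uses_space A (28 * (real k + 1) * (C / eps) * ln n)"
    and "\<And>xs. set xs \<subseteq> {..<n} \<Longrightarrow> length xs \<le> n ^ k \<Longrightarrow> num_heavy xs \<le> C \<Longrightarrow>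
      success_prob A eps xs = 1"
    using F0_algorithm_exists[OF n eps C, where k = k] by blast
  then show "\<exists>A. uses_space A (28 * (real k + 1) * (C / eps) * ln n) \<and>
      (\<forall>xs. set xs \<subseteq> {..<n} \<longrightarrow> length xs \<le> n ^ k \<longrightarrow> num_heavy xs \<le> C \<longrightarrow>
        1 / eps\<^sup>2 \<le> real (F0 xs) \<longrightarrow> 0.98 \<le> success_prob A eps xs)"
    by auto
qed simp_all

end
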